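(* (1) $s_3=U(S_2-S_{1,1})\in\mathcal{E}(\mathcal{P}^{s+}_{3,5})$. (2) If $f\in\mathcal{P}^{s+}_{3,5}$ satisfies $f(0,x,1)=0$ for all $x\ge0$, $f_a(0,0,1)=0$ and $f(1,1,1)=0$, then $f=\lambda s_3$ for some $\lambda\ge0$.
   Context: Let $a,b,c$ be variables. For nonnegative integers $m,n$ put $S_{m,n}=a^mb^n+b^mc^n+c^ma^n$, $S_n=S_{n,0}=a^n+b^n+c^n$, $T_{m,n}=S_{m,n}+S_{n,m}$, $U=abc$ (so $S_{1,1}=ab+bc+ca$). Let $\mathcal{H}^s_{3,5}$ be the real vector space of symmetric homogeneous polynomials of degree 5 in $\mathbb{R}[a,b,c]$; it has basis $s_0=S_5-US_{1,1}$, $s_1=T_{4,1}-2US_{1,1}$, $s_2=T_{3,2}-2US_{1,1}$, $s_3=US_2-US_{1,1}$, $s_4=US_{1,1}$. Let $\mathcal{P}^{s+}_{3,5}=\{f\in\mathcal{H}^s_{3,5}: f(a,b,c)\ge 0\text{ for all }a,b,c\ge0\}$. For a closed convex cone $\mathcal{P}$, an element $f\in\mathcal{P}\setminus\{0\}$ is extremal if whenever $f=g+h$ with $g,h\in\mathcal{P}$ we have $g,h\in\mathbb{R}_{\ge0}f$; $\mathcal{E}(\mathcal{P})$ is the set of extremal elements. $f_a=\partial f/\partial a$. *)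

theory Defs
  imports "HOL-Analysis.Analysis"
begin

text \<open>Polynomials in a,b,c are represented by their (real) polynomial functions
  real \<Rightarrow> real \<Rightarrow> real \<Rightarrow> real.\<close>

type_synonym poly3 = "real \<Rightarrow> real \<Rightarrow> real \<Rightarrow> real"

definition Smn :: "nat \<Rightarrow> nat \<Rightarrow> poly3" where
  "Smn m n = (\<lambda>a b c. a^m * b^n + b^m * c^n + c^m * a^n)"

definition Sn :: "nat \<Rightarrow> poly3" where
  "Sn n = Smn n 0"

definition Tmn :: "nat \<Rightarrow> nat \<Rightarrow> poly3" where
  "Tmn m n = (\<lambda>a b c. Smn m n a b c + Smn n m a b c)"

definition U :: poly3 where
  "U = (\<lambda>a b c. a * b * c)"

definition s0 :: poly3 where "s0 = (\<lambda>a b c. Sn 5 a b c - U a b c * Smn 1 1 a b c)"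
definition s1 :: poly3 where "s1 = (\<lambda>a b c. Tmn 4 1 a b c - 2 * U a b c * Smn 1 1 a b c)"
definition s2 :: poly3 where "s2 = (\<lambda>a b c. Tmn 3 2 a b c - 2 * U a b c * Smn 1 1 a b c)"
definition s3 :: poly3 where "s3 = (\<lambda>a b c. U a b c * Sn 2 a b c - U a b c * Smn 1 1 a b c)"
definition s4 :: poly3 where "s4 = (\<lambda>a b c. U a b c * Smn 1 1 a b c)"

text \<open>The space of symmetric homogeneous quintics, as the real span of its basis s0..s4.\<close>
definition H35 :: "poly3 set" where
  "H35 = {f. \<exists>c0 c1 c2 c3 c4 :: real.
            f = (\<lambda>a b c. c0 * s0 a b c + c1 * s1 a b c + c2 * s2 a b c
                          + c3 * s3 a b c + c4 * s4 a b c)}"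

definition P35 :: "poly3 set" where
  "P35 = {f \<in> H35. \<forall>a b c. a \<ge> 0 \<longrightarrow> b \<ge> 0 \<longrightarrow> c \<ge> 0 \<longrightarrow> f a b c \<ge> 0}"

definition extremal :: "poly3 set \<Rightarrow> poly3 set" where
  "extremal P = {f \<in> P. f \<noteq> (\<lambda>a b c. 0) \<and>
     (\<forall>g h. g \<in> P \<longrightarrow> h \<in> P \<longrightarrow> f = (\<lambda>a b c. g a b c + h a b c) \<longrightarrow>
        (\<exists>\<mu>::real. \<mu> \<ge> 0 \<and> g = (\<lambda>a b c. \<mu> * f a b c)) \<and>
        (\<exists>\<nu>::real. \<nu> \<ge> 0 \<and> h = (\<lambda>a b c. \<nu> * f a b c)))}"

end

theory Submission
  imports Defs
begin

text \<open>Since \<open>s3 = U ((a-b)\<^sup>2 + (b-c)\<^sup>2 + (c-a)\<^sup>2)/2\<close> is nonnegative, any decomposition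
  \<open>s3 = g + h\<close> in the cone forces \<open>g\<close> and \<open>h\<close> to vanish wherever \<open>s3\<close> does, in particular
  on the ray \<open>(0,x,1)\<close> and at \<open>(1,1,1)\<close>. Evaluating the basis at \<open>(0,x,1)\<close> gives
  \<open>x\<^sup>5 + 1, x\<^sup>4 + x, x\<^sup>3 + x\<^sup>2, 0, 0\<close>, so vanishing there kills the coefficients of \<open>s0, s1, s2\<close>;
  at \<open>(1,1,1)\<close> only \<open>s4\<close> survives, killing its coefficient. What remains is a
  multiple of \<open>s3\<close>, with nonnegative factor by evaluating at \<open>(1,1,2)\<close>.\<close>

lemma extremal_if_zeros_determine:
  assumes f: "f \<in> P" "f \<noteq> (\<lambda>a b c. 0)"
    and nonneg: "\<And>g a b c. g \<in> P \<Longrightarrow> a \<ge> 0 \<Longrightarrow> b \<ge> 0 \<Longrightarrow> c \<ge> 0 \<Longrightarrow> g a b c \<ge> 0"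
    and determine: "\<And>g. g \<in> P \<Longrightarrow>
        (\<And>a b c. a \<ge> 0 \<Longrightarrow> b \<ge> 0 \<Longrightarrow> c \<ge> 0 \<Longrightarrow> f a b c = 0 \<Longrightarrow> g a b c = 0) \<Longrightarrow>
        \<exists>\<mu>\<ge>0. g = (\<lambda>a b c. \<mu> * f a b c)"
  shows "f \<in> extremal P"
  unfolding extremal_def
proof (intro CollectI conjI allI impI f)
  fix g h assume g: "g \<in> P" and h: "h \<in> P" and sum: "f = (\<lambda>a b c. g a b c + h a b c)"
  have zeros: "g a b c = 0 \<and> h a b c = 0"
    if "a \<ge> 0" "b \<ge> 0" "c \<ge> 0" "f a b c = 0" for a b c
    using nonneg[OF g that(1-3)] nonneg[OF h that(1-3)] that(4) sum by auto
  show "\<exists>\<mu>\<ge>0. g = (\<lambda>a b c. \<mu> * f a b c)" using determine[OF g] zeros by blast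
  show "\<exists>\<nu>\<ge>0. h = (\<lambda>a b c. \<nu> * f a b c)" using determine[OF h] zeros by blast
qed

lemma basis_values:
  "s0 0 x 1 = x^5 + 1" "s1 0 x 1 = x^4 + x" "s2 0 x 1 = x^3 + x^2"
  "s3 0 x 1 = 0" "s4 0 x 1 = 0"
  "s0 1 1 1 = 0" "s1 1 1 1 = 0" "s2 1 1 1 = 0" "s3 1 1 1 = 0" "s4 1 1 1 = 3"
  "s3 1 1 2 = 2"
  by (simp_all add: s0_def s1_def s2_def s3_def s4_def Sn_def Smn_def Tmn_def U_def)

lemma s3_eq_sum_squares:
  "s3 a b c = a * b * c * (((a - b)^2 + (b - c)^2 + (c - a)^2) / 2)"
  by (simp add: s3_def Sn_def Smn_def U_def power2_eq_square algebra_simps)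

lemma s3_nonneg:
  assumes "a \<ge> 0" "b \<ge> 0" "c \<ge> 0"
  shows "s3 a b c \<ge> 0"
  unfolding s3_eq_sum_squares using assms by simp

lemma s3_in_P35: "s3 \<in> P35"
proof -
  have "s3 = (\<lambda>a b c. 0 * s0 a b c + 0 * s1 a b c + 0 * s2 a b c + 1 * s3 a b c + 0 * s4 a b c)"
    by simp
  then have "s3 \<in> H35" unfolding H35_def by blast
  then show ?thesis unfolding P35_def using s3_nonneg by blast
qed

lemma P35_nonneg: "f \<in> P35 \<Longrightarrow> a \<ge> 0 \<Longrightarrow> b \<ge> 0 \<Longrightarrow> c \<ge> 0 \<Longrightarrow> f a b c \<ge> 0"
  unfolding P35_def by blast

lemma P35_eq_smult_s3:
  assumes f: "f \<in> P35" and ray: "\<forall>x\<ge>0. f 0 x 1 = 0" and centre: "f 1 1 1 = 0"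
  shows "\<exists>lam\<ge>0. f = (\<lambda>a b c. lam * s3 a b c)"
proof -
  from f obtain c0 c1 c2 c3 c4 where f_eq: "f = (\<lambda>a b c. c0 * s0 a b c + c1 * s1 a b c
      + c2 * s2 a b c + c3 * s3 a b c + c4 * s4 a b c)"
    unfolding P35_def H35_def by blast
  have "f 0 0 1 = 0" "f 0 1 1 = 0" "f 0 2 1 = 0" using ray by auto
  then have "c0 = 0" "2 * c0 + 2 * c1 + 2 * c2 = 0" "33 * c0 + 18 * c1 + 12 * c2 = 0"
    by (simp_all add: f_eq basis_values)
  then have c012: "c0 = 0" "c1 = 0" "c2 = 0" by linarith+
  then have "c4 = 0" using centre by (simp add: f_eq basis_values)
  with c012 have f_s3: "f = (\<lambda>a b c. c3 * s3 a b c)" by (simp add: f_eq)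
  have "0 \<le> f 1 1 2" using P35_nonneg[OF f] by simp
  then have "c3 \<ge> 0" by (simp add: f_s3 basis_values)
  with f_s3 show ?thesis by blast
qed

theorem theorem4p6:
  shows "s3 \<in> extremal P35 \<and>
         (\<forall>f. f \<in> P35 \<longrightarrow> (\<forall>x\<ge>0. f 0 x 1 = 0) \<longrightarrow>
              deriv (\<lambda>t. f t 0 1) 0 = 0 \<longrightarrow> f 1 1 1 = 0 \<longrightarrow>
              (\<exists>lam::real. lam \<ge> 0 \<and> f = (\<lambda>a b c. lam * s3 a b c)))"
proof
  have nonzero: "s3 \<noteq> (\<lambda>a b c. 0)"
  proof
    assume "s3 = (\<lambda>a b c. 0)"
    then have "s3 1 1 2 = 0" by metis
    then show False by (simp add: basis_values)
  qed
  have determined: "\<exists>\<mu>\<ge>0. g = (\<lambda>a b c. \<mu> * s3 a b c)"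
    if "g \<in> P35" and "\<And>a b c. a \<ge> 0 \<Longrightarrow> b \<ge> 0 \<Longrightarrow> c \<ge> 0 \<Longrightarrow> s3 a b c = 0 \<Longrightarrow> g a b c = 0"
    for g
  proof (rule P35_eq_smult_s3[OF that(1)])
    show "\<forall>x\<ge>0. g 0 x 1 = 0" using that(2) basis_values(4) by simp
    show "g 1 1 1 = 0" using that(2) basis_values(9) by simp
  qed
  show "s3 \<in> extremal P35"
    using s3_in_P35 nonzero P35_nonneg determined by (rule extremal_if_zeros_determine)
  show "\<forall>f. f \<in> P35 \<longrightarrow> (\<forall>x\<ge>0. f 0 x 1 = 0) \<longrightarrow>
            deriv (\<lambda>t. f t 0 1) 0 = 0 \<longrightarrow> f 1 1 1 = 0 \<longrightarrow>
            (\<exists>lam::real. lam \<ge> 0 \<and> f = (\<lambda>a b c. lam * s3 a b c))"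
    using P35_eq_smult_s3 by blast
qed

end
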